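(* Let $P,F,A_I,A_O,B_I,B_O,E_A,E_B$ be finite-dimensional Hilbert spaces with $d_{A_I}=d_{A_O}=:d_A$, $d_{B_I}=d_{B_O}=:d_B$, $d_P=d_F=d_Ad_{E_A}=d_Bd_{E_B}$. Let $(\Pi_A,\Phi_A)$ and $(\Pi_B,\Phi_B)$ be consistent frame functions for Alice and Bob, i.e. for all unitaries $U_A:A_I\to A_O$, $U_B:B_I\to B_O$, $\Phi_A(U_B)(U_A\otimes\mathbb{1}^{E_A})\Pi_A(U_B)=\Phi_B(U_A)(U_B\otimes\mathbb{1}^{E_B})\Pi_B(U_A)=:\mathcal{G}(U_A,U_B)$. Let $\{U_i\}_{i=1}^{d_A^2}$, $\{V_j\}_{j=1}^{d_B^2}$ be orthonormal bases of unitaries $A_I\to A_O$ and $B_I\to B_O$, and let $|w\rangle=\frac{1}{d_Ad_B}\sum_{i,j}|\mathcal{G}(U_i,V_j)\rangle\!\rangle^{PF}|U_i^*\rangle\!\rangle^{A_IA_O}|V_j^*\rangle\!\rangle^{B_IB_O}$ be the corresponding process vector. Let $E_I,E_O$ be Hilbert spaces isomorphic to $E_A$. Then $$|w\rangle=\frac{1}{d_B}\,\langle\!\langle\mathbb{1}|^{E_IE_O}\sum_j|\Pi_A(V_j)\rangle\!\rangle^{P,A_IE_I}\,|\Phi_A(V_j)\rangle\!\rangle^{A_OE_O,F}\,|V_j^*\rangle\!\rangle^{B_IB_O}.$$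
   Context: A frame function for Alice is a pair $(\Pi_A,\Phi_A)$ of functions sending linear maps $T_B:B_I\to B_O$ to linear maps $\Pi_A(T_B):P\to A_I\otimes E_A$ and $\Phi_A(T_B):A_O\otimes E_A\to F$, unitary whenever $T_B$ is unitary; Bob's frame function is defined symmetrically with $\Pi_B(T_A):P\to B_I\otimes E_B$, $\Phi_B(T_A):B_O\otimes E_B\to F$. All spaces have fixed computational bases. For a linear map $K:X\to Y$, $|K\rangle\!\rangle^{X,Y}=\sum_i|i\rangle^X\otimes(K|i\rangle)^Y\in X\otimes Y$ (so $|\Pi_A(V)\rangle\!\rangle^{P,A_IE_I}\in P\otimes A_I\otimes E_I$ with the output $E_A$ identified with $E_I$, and $|\Phi_A(V)\rangle\!\rangle^{A_OE_O,F}\in A_O\otimes E_O\otimes F$ with the input $E_A$ identified with $E_O$); $K^*$ is entrywise complex conjugation. $\langle\!\langle\mathbb{1}|^{E_IE_O}$ denotes the bra of $|\mathbb{1}\rangle\!\rangle^{E_IE_O}=\sum_e|e\rangle^{E_I}|e\rangle^{E_O}$ applied (partial inner product) to the $E_I,E_O$ tensor factors, leaving the others. An orthonormal basis of unitaries $X\to Y$ ($d=\dim X=\dim Y$) is a set of $d^2$ unitaries $U_i$ with $\{|U_i\rangle\!\rangle\}$ a basis of $X\otimes Y$ and $\langle\!\langle U_i|U_j\rangle\!\rangle=d\,\delta_{ij}$. *)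

theory Defs
  imports "HOL-Library.Cardinality" Complex_Main
begin

text \<open>Every Hilbert space is a finite type of basis labels (its fixed
computational basis). A linear map K : X \<rightarrow> Y is its matrix
K :: 'y \<Rightarrow> 'x \<Rightarrow> complex, with K y x = <y|K|x>. Tensor products of spaces are
product types. A vector in X1 \<otimes> ... \<otimes> Xn is a function of the n basis labels.\<close>

type_synonym ('x, 'y) lmap = "'y \<Rightarrow> 'x \<Rightarrow> complex"

definition mmult :: "('y, 'z) lmap \<Rightarrow> ('x, 'y) lmap \<Rightarrow> ('x, 'z) lmap"
  where "mmult A B = (\<lambda>z x. \<Sum>y\<in>UNIV. A z y * B y x)"

definition unitary_map :: "('x::finite, 'y::finite) lmap \<Rightarrow> bool" where
  "unitary_map K \<longleftrightarrow>
     (\<forall>x x'. (\<Sum>y\<in>UNIV. cnj (K y x) * K y x') = (if x = x' then 1 else 0)) \<and>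
     (\<forall>y y'. (\<Sum>x\<in>UNIV. K y x * cnj (K y' x)) = (if y = y' then 1 else 0))"

definition tensor_id :: "('x, 'y) lmap \<Rightarrow> ('x \<times> 'e, 'y \<times> 'e) lmap" where
  "tensor_id K = (\<lambda>(y, e) (x, e'). if e = e' then K y x else 0)"

text \<open>|K>>^{X,Y} = \<Sum>_i |i>^X \<otimes> (K|i>)^Y, as a function of (x, y).\<close>
definition dket :: "('x, 'y) lmap \<Rightarrow> 'x \<Rightarrow> 'y \<Rightarrow> complex" where
  "dket K = (\<lambda>x y. K y x)"

definition conj_map :: "('x, 'y) lmap \<Rightarrow> ('x, 'y) lmap" where
  "conj_map K = (\<lambda>y x. cnj (K y x))"

definition frame_function ::
  "(('ti::finite, 'to::finite) lmap \<Rightarrow> ('p::finite, 'i::finite \<times> 'e::finite) lmap) \<Rightarrow>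
   (('ti, 'to) lmap \<Rightarrow> ('o::finite \<times> 'e, 'f::finite) lmap) \<Rightarrow> bool" where
  "frame_function Pi Phi \<longleftrightarrow> (\<forall>T. unitary_map T \<longrightarrow> unitary_map (Pi T) \<and> unitary_map (Phi T))"

definition frame_comp ::
  "(('ti, 'to) lmap \<Rightarrow> ('p, 'i \<times> 'e::finite) lmap) \<Rightarrow>
   (('ti, 'to) lmap \<Rightarrow> ('o \<times> 'e, 'f) lmap) \<Rightarrow> ('i::finite, 'o::finite) lmap \<Rightarrow> ('ti, 'to) lmap
   \<Rightarrow> ('p, 'f) lmap" where
  "frame_comp Pi Phi U T = mmult (Phi T) (mmult (tensor_id U) (Pi T))"

definition orthonormal_unitary_basis :: "(nat \<Rightarrow> ('x::finite, 'y::finite) lmap) \<Rightarrow> bool" where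
  "orthonormal_unitary_basis U \<longleftrightarrow>
     CARD('x) = CARD('y) \<and>
     (\<forall>i < CARD('x)^2. unitary_map (U i)) \<and>
     (\<forall>i < CARD('x)^2. \<forall>j < CARD('x)^2.
        (\<Sum>x\<in>UNIV. \<Sum>y\<in>UNIV. cnj (dket (U i) x y) * dket (U j) x y)
          = (if i = j then of_nat CARD('x) else 0)) \<and>
     (\<forall>v :: 'x \<Rightarrow> 'y \<Rightarrow> complex. \<exists>c. v = (\<lambda>x y. \<Sum>i<CARD('x)^2. c i * dket (U i) x y))"

end

theory Submission
  imports Defs
begin

text \<open>Only Alice's frame function enters. For fixed V the process map G(U, V) is linear
  in U, with kernel the contraction over E_A of \<Pi>_A(V) and \<Phi>_A(V). Any orthogonal basis of
  unitaries satisfies the completeness relation \<Sum>_i |U_i>><<U_i| = d_A 1, which carries out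
  the sum over i.\<close>

lemma orthogonal_spanning_completeness:
  fixes b :: "'i \<Rightarrow> 'a::finite \<Rightarrow> complex"
  assumes "finite I" and "c \<noteq> 0"
    and orth: "\<And>i k. i \<in> I \<Longrightarrow> k \<in> I \<Longrightarrow>
      (\<Sum>a\<in>UNIV. cnj (b i a) * b k a) = (if i = k then c else 0)"
    and span: "\<And>v. \<exists>w. v = (\<lambda>a. \<Sum>i\<in>I. w i * b i a)"
  shows "(\<Sum>i\<in>I. b i a * cnj (b i a0)) = (if a = a0 then c else 0)"
proof -
  obtain w where "(\<lambda>a. if a = a0 then 1 else 0) = (\<lambda>a. \<Sum>i\<in>I. w i * b i a)"
    using span by blast
  then have w: "(if a = a0 then 1 else 0) = (\<Sum>i\<in>I. w i * b i a)" for a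
    by (rule fun_cong)
  have coeff: "w i = cnj (b i a0) / c" if "i \<in> I" for i
  proof -
    have "cnj (b i a0) = (\<Sum>a\<in>UNIV. cnj (b i a) * (if a = a0 then 1 else 0))"
      by (simp add: if_distrib cong: if_cong)
    also have "\<dots> = (\<Sum>k\<in>I. w k * (\<Sum>a\<in>UNIV. cnj (b i a) * b k a))"
      by (simp add: w sum_distrib_left sum.swap[of _ I] mult_ac)
    also have "\<dots> = w i * c"
      using \<open>finite I\<close> \<open>i \<in> I\<close> by (simp add: orth if_distrib cong: if_cong)
    finally show ?thesis using \<open>c \<noteq> 0\<close> by (simp add: field_simps)
  qed
  have "(if a = a0 then 1 else 0) = (\<Sum>i\<in>I. w i * b i a)"
    by (rule w)
  also have "\<dots> = (\<Sum>i\<in>I. b i a * cnj (b i a0)) / c"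
    by (simp add: coeff sum_divide_distrib mult.commute)
  finally show ?thesis using \<open>c \<noteq> 0\<close> by (auto simp: field_simps split: if_splits)
qed

lemma orthonormal_unitary_basis_completeness:
  fixes U :: "nat \<Rightarrow> ('x::finite, 'y::finite) lmap"
  assumes "orthonormal_unitary_basis U"
  shows "(\<Sum>i<CARD('x)^2. U i y x * cnj (U i y0 x0))
         = (if x = x0 \<and> y = y0 then of_nat CARD('x) else 0)"
proof -
  let ?b = "\<lambda>i a. U i (snd a) (fst a)"
  have "(\<Sum>i<CARD('x)^2. ?b i (x, y) * cnj (?b i (x0, y0)))
        = (if (x, y) = (x0, y0) then of_nat CARD('x) else 0)"
  proof (rule orthogonal_spanning_completeness)
    fix i k assume "i \<in> {..<CARD('x)^2}" "k \<in> {..<CARD('x)^2}"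
    with assms have "(\<Sum>x\<in>UNIV. \<Sum>y\<in>UNIV. cnj (dket (U i) x y) * dket (U k) x y)
        = (if i = k then of_nat CARD('x) else 0)"
      unfolding orthonormal_unitary_basis_def by blast
    then show "(\<Sum>a\<in>UNIV. cnj (?b i a) * ?b k a) = (if i = k then of_nat CARD('x) else 0)"
      by (simp add: dket_def case_prod_unfold UNIV_Times_UNIV[symmetric] sum.cartesian_product
          del: UNIV_Times_UNIV)
  next
    fix v :: "'x \<times> 'y \<Rightarrow> complex"
    obtain w where "curry v = (\<lambda>x y. \<Sum>i<CARD('x)^2. w i * dket (U i) x y)"
      using assms unfolding orthonormal_unitary_basis_def by blast
    then have "v = (\<lambda>a. \<Sum>i<CARD('x)^2. w i * ?b i a)"
      by (auto simp: dket_def fun_eq_iff curry_def dest: fun_cong)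
    then show "\<exists>w. v = (\<lambda>a. \<Sum>i\<in>{..<CARD('x)^2}. w i * ?b i a)" by blast
  qed simp_all
  then show ?thesis by simp
qed

lemma mmult_tensor_id_apply:
  fixes K :: "('p, 'x \<times> 'e::finite) lmap"
  shows "mmult (tensor_id W) K (y, e) p = (\<Sum>x\<in>UNIV. W y x * K (x, e) p)"
proof -
  have "mmult (tensor_id W) K (y, e) p
        = (\<Sum>x\<in>UNIV. \<Sum>e'\<in>UNIV. tensor_id W (y, e) (x, e') * K (x, e') p)"
    unfolding mmult_def
    by (simp add: UNIV_Times_UNIV[symmetric] sum.cartesian_product del: UNIV_Times_UNIV)
  also have "\<dots> = (\<Sum>x\<in>UNIV. W y x * K (x, e) p)"
    by (simp add: tensor_id_def if_distrib[where f = "\<lambda>z. z * _"] sum.delta' cong: if_cong)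
  finally show ?thesis .
qed

lemma frame_comp_apply:
  fixes Phi :: "('ti, 'to) lmap \<Rightarrow> ('y::finite \<times> 'e::finite, 'f) lmap"
  shows "frame_comp Pi Phi W T f p =
     (\<Sum>y\<in>UNIV. \<Sum>x\<in>UNIV. W y x * (\<Sum>e\<in>UNIV. Phi T f (y, e) * Pi T (x, e) p))"
proof -
  have "frame_comp Pi Phi W T f p
        = (\<Sum>y\<in>UNIV. \<Sum>e\<in>UNIV. Phi T f (y, e) * (\<Sum>x\<in>UNIV. W y x * Pi T (x, e) p))"
    unfolding frame_comp_def mmult_def[of "Phi T"] mmult_tensor_id_apply[symmetric]
    by (simp add: UNIV_Times_UNIV[symmetric] sum.cartesian_product del: UNIV_Times_UNIV)
  then show ?thesis
    by (simp add: sum_distrib_left sum.swap[of _ "UNIV :: 'e set"] mult_ac)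
qed

lemma orthonormal_unitary_basis_expansion:
  fixes U :: "nat \<Rightarrow> ('x::finite, 'y::finite) lmap"
  assumes "orthonormal_unitary_basis U"
  shows "(\<Sum>i<CARD('x)^2. (\<Sum>y\<in>UNIV. \<Sum>x\<in>UNIV. U i y x * M y x) * cnj (U i y0 x0))
         = of_nat CARD('x) * M y0 x0"
proof -
  have "(\<Sum>i<CARD('x)^2. (\<Sum>y\<in>UNIV. \<Sum>x\<in>UNIV. U i y x * M y x) * cnj (U i y0 x0))
        = (\<Sum>y\<in>UNIV. \<Sum>x\<in>UNIV. M y x * (\<Sum>i<CARD('x)^2. U i y x * cnj (U i y0 x0)))"
    by (simp add: sum_distrib_left sum_distrib_right sum.swap[of _ "{..<CARD('x)^2}"] mult_ac)
  also have "\<dots> = (\<Sum>y\<in>UNIV. \<Sum>x\<in>UNIV.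
        if x = x0 then if y = y0 then of_nat CARD('x) * M y0 x0 else 0 else 0)"
    by (intro sum.cong refl) (simp add: orthonormal_unitary_basis_completeness[OF assms])
  also have "\<dots> = of_nat CARD('x) * M y0 x0"
    by simp
  finally show ?thesis .
qed

lemma frame_comp_sum_basis:
  fixes U :: "nat \<Rightarrow> ('i::finite, 'o::finite) lmap"
  assumes "orthonormal_unitary_basis U"
  shows "(\<Sum>i<CARD('i)^2. frame_comp Pi Phi (U i) T f p * cnj (U i o' i'))
         = of_nat CARD('i) * (\<Sum>e\<in>UNIV. Pi T (i', e) p * Phi T f (o', e))"
  unfolding frame_comp_apply orthonormal_unitary_basis_expansion[OF assms]
  by (simp add: mult.commute)

theorem theorem3:
  fixes PiA :: "('bi::finite, 'bo::finite) lmap \<Rightarrow> ('p::finite, 'ai::finite \<times> 'ea::finite) lmap"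
    and PhiA :: "('bi, 'bo) lmap \<Rightarrow> ('ao::finite \<times> 'ea, 'f::finite) lmap"
    and PiB :: "('ai, 'ao) lmap \<Rightarrow> ('p, 'bi \<times> 'eb::finite) lmap"
    and PhiB :: "('ai, 'ao) lmap \<Rightarrow> ('bo \<times> 'eb, 'f) lmap"
    and U :: "nat \<Rightarrow> ('ai, 'ao) lmap"
    and V :: "nat \<Rightarrow> ('bi, 'bo) lmap"
  assumes dimA: "CARD('ai) = CARD('ao)"
    and dimB: "CARD('bi) = CARD('bo)"
    and dimPF: "CARD('p) = CARD('f)"
    and dimPA: "CARD('p) = CARD('ai) * CARD('ea)"
    and dimPB: "CARD('p) = CARD('bi) * CARD('eb)"
    and frameA: "frame_function PiA PhiA"
    and frameB: "frame_function PiB PhiB"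
    and consistent: "\<And>UA UB. unitary_map UA \<Longrightarrow> unitary_map UB \<Longrightarrow>
        frame_comp PiA PhiA UA UB = frame_comp PiB PhiB UB UA"
    and basisU: "orthonormal_unitary_basis U"
    and basisV: "orthonormal_unitary_basis V"
  shows "(\<lambda>(p::'p) (f::'f) (ai::'ai) (ao::'ao) (bi::'bi) (bo::'bo).
            (1 / (of_nat CARD('ai) * of_nat CARD('bi))) *
            (\<Sum>i<CARD('ai)^2. \<Sum>j<CARD('bi)^2.
               dket (frame_comp PiA PhiA (U i) (V j)) p f *
               dket (conj_map (U i)) ai ao * dket (conj_map (V j)) bi bo))
       = (\<lambda>p f ai ao bi bo.
            (1 / of_nat CARD('bi)) *
            (\<Sum>j<CARD('bi)^2. \<Sum>e\<in>(UNIV::'ea set).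
               dket (PiA (V j)) p (ai, e) * dket (PhiA (V j)) (ao, e) f *
               dket (conj_map (V j)) bi bo))"
proof -
  have sum_over_U: "(\<Sum>i<CARD('ai)^2. \<Sum>j<CARD('bi)^2.
           dket (frame_comp PiA PhiA (U i) (V j)) p f *
           dket (conj_map (U i)) ai ao * dket (conj_map (V j)) bi bo)
      = of_nat CARD('ai) * (\<Sum>j<CARD('bi)^2. \<Sum>e\<in>UNIV.
           dket (PiA (V j)) p (ai, e) * dket (PhiA (V j)) (ao, e) f *
           dket (conj_map (V j)) bi bo)" for p f ai ao bi bo
  proof -
    have "(\<Sum>i<CARD('ai)^2. \<Sum>j<CARD('bi)^2.
             dket (frame_comp PiA PhiA (U i) (V j)) p f *
             dket (conj_map (U i)) ai ao * dket (conj_map (V j)) bi bo)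
        = (\<Sum>j<CARD('bi)^2.
             (\<Sum>i<CARD('ai)^2. frame_comp PiA PhiA (U i) (V j) f p * cnj (U i ao ai)) *
             cnj (V j bo bi))"
      unfolding dket_def conj_map_def
      by (simp add: sum.swap[of _ "{..<CARD('ai)^2}"] sum_distrib_right)
    also have "\<dots> = of_nat CARD('ai) * (\<Sum>j<CARD('bi)^2. \<Sum>e\<in>UNIV.
             dket (PiA (V j)) p (ai, e) * dket (PhiA (V j)) (ao, e) f *
             dket (conj_map (V j)) bi bo)"
      unfolding frame_comp_sum_basis[OF basisU] dket_def conj_map_def
      by (simp add: sum_distrib_left sum_distrib_right mult_ac)
    finally show ?thesis .
  qed
  show ?thesis by (simp add: sum_over_U)
qed

end
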